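(* Let $\gamma(z)=\sum_{n=1}^{\infty} z^{n-1}\left(\frac{1}{n}-\log\frac{n+1}{n}\right)$ for $|z|\le 1$, and for $k=2,3,\ldots$ and $|z|\le1$ let $\mathrm{Li}_k(z)=\sum_{n=1}^{\infty} \frac{z^n}{n^k}$. If $|z|\le 1$, then $$z\gamma(z)=\sum_{k=2}^{\infty}(-1)^k\frac{\mathrm{Li}_k(z)}{k}.$$ If in addition $z\neq 1$, then $$z^2\gamma(z)=z+(1-z)\log(1-z)-\sum_{k=2}^{\infty}\frac{\mathrm{Li}_k(z)-z}{k}.$$
   Context: For $z\neq 0$, $\log z=\ln|z|+i\,\mathrm{Arg}\,z$ with $-\pi<\mathrm{Arg}\,z\le\pi$. The series defining $\gamma(z)$ converges for $|z|\le 1$; $\gamma(z)$ is called the generalized-Euler-constant function. *)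

theory Defs
  imports "HOL-Analysis.Analysis"
begin

definition gen_euler_gamma :: "complex \<Rightarrow> complex" where
  "gen_euler_gamma z =
     (\<Sum>m. z ^ m * (1 / of_nat (Suc m) - Ln (of_nat (Suc (Suc m)) / of_nat (Suc m))))"

definition polylog :: "nat \<Rightarrow> complex \<Rightarrow> complex" where
  "polylog k z = (\<Sum>m. z ^ Suc m / of_nat (Suc m) ^ k)"

end

theory Submission
  imports Defs
begin

text \<open>
  For \<open>n \<ge> 1\<close> the logarithm series gives
  \<open>1/n - log (1 + 1/n) = \<Sum>k\<ge>2. (-1)^k / (k n^k)\<close> and
  \<open>log ((n+1)/n) - 1/(n+1) = \<Sum>k\<ge>2. 1 / (k (n+1)^k)\<close>.
  Multiplying by \<open>z^n\<close> resp. \<open>z^(n+1)\<close> and summing over \<open>n\<close> gives double series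
  that converge absolutely for \<open>|z| \<le> 1\<close>, once the term \<open>n = 1\<close> of the first one
  (the alternating harmonic series, with sum \<open>1 - log 2\<close>) is split off: their terms
  are bounded by \<open>2^(2-k) / n^2\<close>. Interchanging the summations turns the inner sums
  into \<open>Li_k(z) - z\<close>. What remains in the second identity is
  \<open>\<Sum>n\<ge>1. z^(n+1) / (n (n+1)) = z + (1 - z) log (1 - z)\<close>, which follows from the
  logarithm series inside the unit disc and extends to its boundary point \<open>z \<noteq> 1\<close>
  by continuity, the series being uniformly convergent on the closed disc.
\<close>

lemma sums_swap_of_product_bound:
  fixes f :: "nat \<Rightarrow> nat \<Rightarrow> 'a::banach" and M r :: "nat \<Rightarrow> real"
  assumes bound: "\<And>m j. norm (f m j) \<le> M m * r j"
    and M: "summable M" "\<And>m. M m \<ge> 0" and r: "summable r" "\<And>j. r j \<ge> 0"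
    and rows: "\<And>m. (\<lambda>j. f m j) sums A m"
    and cols: "\<And>j. (\<lambda>m. f m j) sums C j"
  shows "summable A" and "C sums suminf A"
proof -
  have row_norms: "((\<lambda>j. norm (M m * r j)) has_sum (M m * suminf r)) UNIV" for m
    using sums_mult[OF summable_sums[OF r(1)], of "M m"] M(2) r(2)
    by (intro sums_nonneg_imp_has_sum) (auto simp: abs_mult)
  define g where "g = (\<lambda>(m, j). M m * r j)"
  have "(\<lambda>x. norm (g x)) summable_on UNIV \<times> UNIV"
  proof (subst Infinite_Sum.abs_summable_on_Sigma_iff, intro conjI ballI)
    show "(\<lambda>j. norm (g (m, j))) summable_on UNIV" for m
      using row_norms by (auto simp: summable_on_def g_def)
    have "(\<Sum>\<^sub>\<infinity>j. norm (g (m, j))) = M m * suminf r" for m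
      using infsumI[OF row_norms[of m]] by (simp add: g_def)
    moreover have "(\<lambda>m. norm (M m * suminf r)) summable_on UNIV"
      using summable_mult2[OF M(1)] M(2) suminf_nonneg[OF r]
      by (intro summable_nonneg_imp_summable_on) (auto simp: abs_mult)
    ultimately show "(\<lambda>m. norm (\<Sum>\<^sub>\<infinity>j. norm (g (m, j)))) summable_on UNIV"
      by simp
  qed
  then have "(\<lambda>x. norm ((\<lambda>(m, j). f m j) x)) summable_on UNIV \<times> UNIV"
    by (rule Infinite_Sum.abs_summable_on_comparison_test)
      (use bound M(2) r(2) in \<open>auto simp: g_def abs_mult\<close>)
  then obtain S where S: "((\<lambda>(m, j). f m j) has_sum S) (UNIV \<times> UNIV)"
    using abs_summable_summable summable_on_def by blast
  have "summable (\<lambda>j. norm (f m j))" for m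
    by (rule summable_comparison_test'[OF summable_mult[OF r(1), where c="M m"], of 0]) (simp add: bound)
  then have rows': "((\<lambda>j. f m j) has_sum A m) UNIV" for m
    by (rule norm_summable_imp_has_sum[OF _ rows])
  have A: "A sums S"
    by (rule has_sum_imp_sums, rule has_sum_SigmaD[OF S]) (use rows' in auto)
  have "summable (\<lambda>m. norm (f m j))" for j
    by (rule summable_comparison_test'[OF summable_mult2[OF M(1), where c="r j"], of 0]) (simp add: bound)
  then have cols': "((\<lambda>m. f m j) has_sum C j) UNIV" for j
    by (rule norm_summable_imp_has_sum[OF _ cols])
  from S have S_swap: "((\<lambda>(j, m). f m j) has_sum S) (UNIV \<times> UNIV)"
    by (subst (asm) has_sum_swap) simp
  have "C sums S"
    by (rule has_sum_imp_sums, rule has_sum_SigmaD[OF S_swap]) (use cols' in auto)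
  with A show "summable A" and "C sums suminf A"
    by (auto simp: sums_iff)
qed

lemma ln_one_plus_series_tail_sums:
  fixes x :: real
  assumes "\<bar>x\<bar> < 1"
  shows "(\<lambda>j. (-x) ^ (j + 2) / real (j + 2)) sums (x - ln (1 + x))"
proof -
  have "(\<lambda>n. - ((-x) ^ n) / real n) sums ln (1 + x)"
    by (rule ln_series'[OF assms])
  then have "(\<lambda>j. - ((-x) ^ (j + 2)) / real (j + 2)) sums (ln (1 + x) - x)"
    by (subst sums_iff_shift) (simp add: numeral_2_eq_2)
  from sums_minus[OF this] show ?thesis
    by simp
qed

lemma ln_alternating_series_tail_sums:
  fixes y :: real
  assumes "\<bar>y\<bar> < 1"
  shows "(\<lambda>j. (-1) ^ j * y ^ (j + 2) / real (j + 2)) sums (y - ln (1 + y))"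
  using ln_one_plus_series_tail_sums[OF assms] by (simp add: power_minus' mult_ac)

lemma ln_one_minus_series_tail_sums:
  fixes y :: real
  assumes "\<bar>y\<bar> < 1"
  shows "(\<lambda>j. y ^ (j + 2) / real (j + 2)) sums (- y - ln (1 - y))"
  using ln_one_plus_series_tail_sums[of "-y"] assms by simp

lemma alternating_harmonic_series_tail_sums:
  "(\<lambda>j. (-1) ^ j / real (j + 2)) sums (1 - ln 2)"
proof -
  have "(\<lambda>k. (-1) ^ Suc k / real (Suc (Suc k))) sums (ln 2 - 1)"
    using alternating_harmonic_series_sums by (subst sums_Suc_iff) simp
  from sums_minus[OF this] show ?thesis
    by simp
qed

lemma polylog_sums:
  fixes z :: complex
  assumes "norm z \<le> 1" and "k \<ge> 2"
  shows "(\<lambda>m. z ^ Suc m / of_nat (Suc m) ^ k) sums polylog k z"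
proof -
  have "summable (\<lambda>m. inverse (real (Suc m) ^ 2))"
    using inverse_power_summable[of 2, where 'a=real] by (subst summable_Suc_iff) simp
  moreover have "norm (z ^ Suc m / of_nat (Suc m) ^ k) \<le> inverse (real (Suc m) ^ 2)" for m
  proof -
    have "norm (z ^ Suc m / of_nat (Suc m) ^ k) \<le> 1 / real (Suc m) ^ k"
      using assms(1) unfolding norm_divide norm_power norm_of_nat
      by (intro divide_right_mono power_le_one) auto
    also have "\<dots> \<le> 1 / real (Suc m) ^ 2"
      using assms(2) by (intro divide_left_mono power_increasing) auto
    finally show ?thesis
      by (simp add: divide_inverse)
  qed
  ultimately have "summable (\<lambda>m. z ^ Suc m / of_nat (Suc m) ^ k)"
    by (rule summable_comparison_test'[where N=0])
  then show ?thesis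
    unfolding polylog_def by (rule summable_sums)
qed

lemma polylog_minus_id_sums:
  fixes z :: complex
  assumes "norm z \<le> 1" and "k \<ge> 2"
  shows "(\<lambda>m. z ^ (m + 2) / of_nat (m + 2) ^ k) sums (polylog k z - z)"
  unfolding add_2_eq_Suc' using polylog_sums[OF assms] by (subst sums_Suc_iff) simp

lemma inverse_mult_power_le_geometric:
  "1 / (real (j + 2) * real (m + 2) ^ (j + 2)) \<le> 1 / real (m + 2) ^ 2 * (1 / 2) ^ j"
proof -
  have "real (m + 2) ^ 2 * 2 ^ j \<le> real (m + 2) ^ 2 * real (m + 2) ^ j"
    by (intro mult_left_mono power_mono) auto
  also have "\<dots> = 1 * real (m + 2) ^ (j + 2)"
    by (simp add: power_add power2_eq_square)
  also have "\<dots> \<le> real (j + 2) * real (m + 2) ^ (j + 2)"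
    by (intro mult_right_mono) auto
  finally have "1 / (real (j + 2) * real (m + 2) ^ (j + 2)) \<le> 1 / (real (m + 2) ^ 2 * 2 ^ j)"
    by (intro divide_left_mono) auto
  then show ?thesis
    by (simp add: power_one_over)
qed

lemma polylog_tail_double_series:
  fixes z :: complex and s :: "nat \<Rightarrow> real" and g :: "real \<Rightarrow> real"
  assumes z: "norm z \<le> 1" and s: "\<And>j. \<bar>s j\<bar> \<le> 1"
    and g: "\<And>y. \<bar>y\<bar> < 1 \<Longrightarrow> (\<lambda>j. s j * y ^ (j + 2) / real (j + 2)) sums g y"
  shows "(\<lambda>j. of_real (s j) / of_nat (j + 2) * (polylog (j + 2) z - z))
           sums (\<Sum>m. z ^ (m + 2) * of_real (g (1 / real (m + 2))))"
proof -
  define f where "f m j = of_real (s j) / of_nat (j + 2) * (z ^ (m + 2) / of_nat (m + 2) ^ (j + 2))"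
    for m j
  have bound: "norm (f m j) \<le> 1 / real (m + 2) ^ 2 * (1 / 2) ^ j" for m j
  proof -
    have "norm (of_real (s j) / of_nat (j + 2) :: complex) \<le> 1 / real (j + 2)"
      using s[of j] unfolding norm_divide norm_of_nat norm_of_real by (intro divide_right_mono) auto
    moreover have "norm (z ^ (m + 2) / of_nat (m + 2) ^ (j + 2)) \<le> 1 / real (m + 2) ^ (j + 2)"
      using z unfolding norm_divide norm_power norm_of_nat by (intro divide_right_mono power_le_one) auto
    ultimately have "norm (f m j) \<le> 1 / real (j + 2) * (1 / real (m + 2) ^ (j + 2))"
      unfolding f_def norm_mult by (rule mult_mono) auto
    then show ?thesis
      using inverse_mult_power_le_geometric[of j m] by simp
  qed
  have M: "summable (\<lambda>m. 1 / real (m + 2) ^ 2)"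
    using inverse_power_summable[of 2, where 'a=real] by (subst summable_iff_shift) (simp add: divide_inverse)
  have r: "summable (\<lambda>j. (1 / 2 :: real) ^ j)"
    by (rule summable_geometric) simp
  have rows: "(\<lambda>j. f m j) sums (z ^ (m + 2) * of_real (g (1 / real (m + 2))))" for m
  proof -
    have "(\<lambda>j. z ^ (m + 2) * of_real (s j * (1 / real (m + 2)) ^ (j + 2) / real (j + 2)))
            sums (z ^ (m + 2) * of_real (g (1 / real (m + 2))))"
      by (intro sums_mult sums_of_real g) simp
    then show ?thesis
      by (simp add: f_def power_one_over mult_ac)
  qed
  have cols: "(\<lambda>m. f m j) sums (of_real (s j) / of_nat (j + 2) * (polylog (j + 2) z - z))" for j
    unfolding f_def using z by (intro sums_mult polylog_minus_id_sums) auto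
  show ?thesis
    by (rule sums_swap_of_product_bound(2)[OF bound M _ r _ rows cols]) auto
qed

definition euler_coeff :: "nat \<Rightarrow> real" where
  "euler_coeff m = 1 / real (Suc m) - ln (real (Suc (Suc m)) / real (Suc m))"

lemma gen_euler_gamma_eq_euler_coeff:
  "gen_euler_gamma z = (\<Sum>m. z ^ m * of_real (euler_coeff m))"
proof -
  have "Ln (of_nat (Suc (Suc m)) / of_nat (Suc m)) = of_real (ln (real (Suc (Suc m)) / real (Suc m)))"
    for m
    using Ln_of_real[of "real (Suc (Suc m)) / real (Suc m)"] by simp
  then show ?thesis
    unfolding gen_euler_gamma_def euler_coeff_def by simp
qed

lemma euler_coeff_0: "euler_coeff 0 = 1 - ln 2"
  by (simp add: euler_coeff_def)

lemma euler_coeff_Suc: "euler_coeff (Suc m) = 1 / real (m + 2) - ln (1 + 1 / real (m + 2))"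
proof -
  have "1 + 1 / real (m + 2) = real (Suc (Suc (Suc m))) / real (Suc (Suc m))"
    by (simp add: field_simps)
  then show ?thesis
    by (simp add: euler_coeff_def)
qed

lemma euler_coeff_eq_diff:
  "euler_coeff m = 1 / (real (m + 1) * real (m + 2)) - (- (1 / real (m + 2)) - ln (1 - 1 / real (m + 2)))"
proof -
  have "1 - 1 / real (m + 2) = real (Suc m) / real (Suc (Suc m))"
    by (simp add: field_simps)
  then have "ln (1 - 1 / real (m + 2)) = - ln (real (Suc (Suc m)) / real (Suc m))"
    by (simp add: ln_div)
  moreover have "1 / real (Suc m) = 1 / (real (m + 1) * real (m + 2)) + 1 / real (m + 2)"
    by (simp add: divide_simps)
  ultimately show ?thesis
    by (simp add: euler_coeff_def)
qed

lemma euler_coeff_nonneg: "0 \<le> euler_coeff m"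
proof -
  have "real (Suc (Suc m)) / real (Suc m) = 1 + 1 / real (Suc m)"
    by (simp add: field_simps)
  then show ?thesis
    using ln_add_one_self_le_self[of "1 / real (Suc m)"] by (simp add: euler_coeff_def)
qed

lemma euler_coeff_le: "euler_coeff m \<le> 1 / (real (m + 1) * real (m + 2))"
  using ln_one_minus_pos_upper_bound[of "1 / real (m + 2)"] by (simp add: euler_coeff_eq_diff)

lemma inverse_consecutive_product_sums: "(\<lambda>m. 1 / (real (m + 1) * real (m + 2))) sums 1"
proof -
  have "(\<lambda>m. inverse (real (Suc m)) - inverse (real (Suc (Suc m)))) sums (inverse (real (Suc 0)) - 0)"
    by (rule telescope_sums'[OF LIMSEQ_inverse_real_of_nat])
  moreover have "inverse (real (Suc m)) - inverse (real (Suc (Suc m))) = 1 / (real (m + 1) * real (m + 2))"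
    for m
    by (simp add: field_simps)
  ultimately show ?thesis
    by simp
qed

lemma gen_euler_gamma_sums:
  fixes z :: complex
  assumes "norm z \<le> 1"
  shows "(\<lambda>m. z ^ m * of_real (euler_coeff m)) sums gen_euler_gamma z"
proof -
  have "norm (z ^ m * of_real (euler_coeff m)) \<le> 1 / (real (m + 1) * real (m + 2))" for m
  proof -
    have "norm (z ^ m * of_real (euler_coeff m)) \<le> 1 * euler_coeff m"
      using assms euler_coeff_nonneg[of m] unfolding norm_mult norm_power norm_of_real
      by (intro mult_mono power_le_one) auto
    then show ?thesis
      using euler_coeff_le[of m] by simp
  qed
  then have "summable (\<lambda>m. z ^ m * of_real (euler_coeff m))"
    by (intro summable_comparison_test'[OF sums_summable[OF inverse_consecutive_product_sums], of 0])
      auto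
  then show ?thesis
    unfolding gen_euler_gamma_eq_euler_coeff by (rule summable_sums)
qed

lemma power_div_consecutive_product_sums_of_norm_less:
  fixes z :: complex
  assumes "norm z < 1"
  shows "(\<lambda>m. z ^ (m + 2) / (of_nat (m + 1) * of_nat (m + 2))) sums (z + (1 - z) * Ln (1 - z))"
proof -
  have "(\<lambda>n. z ^ n / of_nat n) sums (- Ln (1 - z))"
    using sums_minus[OF Ln_series'[of "-z"]] assms by simp
  then have ln_series: "(\<lambda>m. z ^ Suc m / of_nat (Suc m)) sums (- Ln (1 - z))"
    by (subst sums_Suc_iff) simp
  then have "(\<lambda>m. z ^ Suc (Suc m) / of_nat (Suc (Suc m))) sums (- Ln (1 - z) - z)"
    by (subst sums_Suc_iff) simp
  from sums_diff[OF sums_mult[OF ln_series, of z] this]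
  have "(\<lambda>m. z * (z ^ Suc m / of_nat (Suc m)) - z ^ Suc (Suc m) / of_nat (Suc (Suc m)))
          sums (z + (1 - z) * Ln (1 - z))"
    by (simp add: algebra_simps)
  moreover have "z * (z ^ Suc m / of_nat (Suc m)) - z ^ Suc (Suc m) / of_nat (Suc (Suc m))
                   = z ^ (m + 2) / (of_nat (m + 1) * of_nat (m + 2))" for m
  proof -
    have "(of_nat (m + 1) :: complex) \<noteq> 0" "(of_nat (m + 2) :: complex) \<noteq> 0"
      by (simp_all only: of_nat_eq_0_iff)
    then show ?thesis
      by (simp add: field_simps del: of_nat_add of_nat_Suc) (simp add: algebra_simps)
  qed
  ultimately show ?thesis
    by simp
qed

lemma continuous_on_cball_eq_if_eq_on_ball:
  fixes f g :: "'a::{real_normed_vector, perfect_space} \<Rightarrow> 'b::t2_space"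
  assumes "continuous_on (cball a r) f" and "isCont g z" and "z \<in> cball a r" and "r > 0"
    and "\<And>w. w \<in> ball a r \<Longrightarrow> f w = g w"
  shows "f z = g z"
proof (rule tendsto_unique)
  show "at z within ball a r \<noteq> bot"
    using assms(3,4) by (simp add: trivial_limit_within islimpt_ball)
  have "(f \<longlongrightarrow> f z) (at z within cball a r)"
    using assms(1,3) by (simp add: continuous_on_def)
  then show "(f \<longlongrightarrow> f z) (at z within ball a r)"
    by (rule tendsto_within_subset) auto
  have "(g \<longlongrightarrow> g z) (at z within ball a r)"
    using assms(2) by (simp add: continuous_at_imp_continuous_at_within flip: continuous_within)
  moreover have "\<forall>\<^sub>F w in at z within ball a r. g w = f w"
    unfolding eventually_at_filter using assms(5) by (intro always_eventually) auto
  ultimately show "(f \<longlongrightarrow> g z) (at z within ball a r)"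
    by (rule Lim_transform_eventually)
qed

lemma power_div_consecutive_product_sums:
  fixes z :: complex
  assumes "norm z \<le> 1" and "z \<noteq> 1"
  shows "(\<lambda>m. z ^ (m + 2) / (of_nat (m + 1) * of_nat (m + 2))) sums (z + (1 - z) * Ln (1 - z))"
proof -
  define t where "t m w = w ^ (m + 2) / (of_nat (m + 1) * of_nat (m + 2))" for m and w :: complex
  have bound: "norm (t m w) \<le> 1 / (real (m + 1) * real (m + 2))" if "w \<in> cball 0 1" for m w
    using that unfolding t_def norm_divide norm_mult norm_power norm_of_nat
    by (intro divide_right_mono power_le_one) auto
  note summable_bound = sums_summable[OF inverse_consecutive_product_sums]
  have "continuous_on (cball 0 1) (\<lambda>w. \<Sum>i<n. t i w)" for n
    unfolding t_def by (intro continuous_intros) (simp_all only: mult_eq_0_iff of_nat_eq_0_iff, simp)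
  then have sum_cont: "continuous_on (cball 0 1) (\<lambda>w. \<Sum>m. t m w)"
    by (intro uniform_limit_theorem[OF _ Weierstrass_m_test[OF bound summable_bound]]
        always_eventually allI) auto
  have "Re z < 1"
    using assms by (smt (verit) cmod_Im_le_iff complex.expand complex_Re_le_cmod one_complex.simps)
  then have limit_cont: "isCont (\<lambda>w. w + (1 - w) * Ln (1 - w)) z"
    by (auto intro!: continuous_intros simp: complex_nonpos_Reals_iff)
  have "(\<Sum>m. t m w) = w + (1 - w) * Ln (1 - w)" if "w \<in> ball 0 1" for w
    using that sums_unique[OF power_div_consecutive_product_sums_of_norm_less] by (simp add: t_def)
  then have "(\<Sum>m. t m z) = z + (1 - z) * Ln (1 - z)"
    using assms(1) by (intro continuous_on_cball_eq_if_eq_on_ball[OF sum_cont limit_cont]) auto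
  moreover have "summable (\<lambda>m. t m z)"
    using assms(1) bound by (intro summable_comparison_test'[OF summable_bound, of 0]) auto
  ultimately show ?thesis
    unfolding t_def by (metis summable_sums)
qed

lemma gen_euler_gamma_alternating_polylog_sums:
  fixes z :: complex
  assumes "norm z \<le> 1"
  shows "(\<lambda>j. (-1) ^ (j + 2) * polylog (j + 2) z / of_nat (j + 2)) sums (z * gen_euler_gamma z)"
proof -
  have "(\<lambda>m. z ^ Suc m * of_real (euler_coeff (Suc m))) sums (gen_euler_gamma z - of_real (1 - ln 2))"
    using gen_euler_gamma_sums[OF assms] by (subst sums_Suc_iff) (simp add: euler_coeff_0)
  from sums_mult[OF this, of z]
  have "(\<lambda>m. z ^ (m + 2) * of_real (1 / real (m + 2) - ln (1 + 1 / real (m + 2))))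
          sums (z * gen_euler_gamma z - z * of_real (1 - ln 2))"
    by (simp add: euler_coeff_Suc algebra_simps)
  then have "(\<lambda>j. of_real ((-1) ^ j) / of_nat (j + 2) * (polylog (j + 2) z - z))
               sums (z * gen_euler_gamma z - z * of_real (1 - ln 2))"
    using polylog_tail_double_series[OF assms, of "\<lambda>j. (-1) ^ j" "\<lambda>y. y - ln (1 + y)"]
      ln_alternating_series_tail_sums
    by (simp add: sums_iff)
  moreover have "(\<lambda>j. z * of_real ((-1) ^ j / real (j + 2))) sums (z * of_real (1 - ln 2))"
    by (intro sums_mult sums_of_real alternating_harmonic_series_tail_sums)
  ultimately have "(\<lambda>j. of_real ((-1) ^ j) / of_nat (j + 2) * (polylog (j + 2) z - z)
                     + z * of_real ((-1) ^ j / real (j + 2))) sums (z * gen_euler_gamma z)"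
    using sums_add by fastforce
  moreover have "of_real ((-1) ^ j) / of_nat (j + 2) * (polylog (j + 2) z - z)
                   + z * of_real ((-1) ^ j / real (j + 2))
                 = (-1) ^ (j + 2) * polylog (j + 2) z / of_nat (j + 2)" for j
    by (simp add: add_divide_distrib[symmetric] algebra_simps)
  ultimately show ?thesis
    by simp
qed

lemma gen_euler_gamma_polylog_minus_id_sums:
  fixes z :: complex
  assumes "norm z \<le> 1" and "z \<noteq> 1"
  shows "(\<lambda>j. (polylog (j + 2) z - z) / of_nat (j + 2))
           sums (z + (1 - z) * Ln (1 - z) - z\<^sup>2 * gen_euler_gamma z)"
proof -
  let ?g = "\<lambda>y. - y - ln (1 - y)"
  have "z ^ (m + 2) / (of_nat (m + 1) * of_nat (m + 2)) - z\<^sup>2 * (z ^ m * of_real (euler_coeff m))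
          = z ^ (m + 2) * of_real (?g (1 / real (m + 2)))" for m
  proof -
    have "z\<^sup>2 * (z ^ m * of_real (euler_coeff m))
            = z ^ (m + 2) * (of_real (1 / (real (m + 1) * real (m + 2))) - of_real (?g (1 / real (m + 2))))"
      unfolding euler_coeff_eq_diff of_real_diff[symmetric] by (simp add: power_add power2_eq_square)
    then show ?thesis
      by (simp add: right_diff_distrib)
  qed
  then have "(\<lambda>m. z ^ (m + 2) * of_real (?g (1 / real (m + 2))))
               sums (z + (1 - z) * Ln (1 - z) - z\<^sup>2 * gen_euler_gamma z)"
    using sums_diff[OF power_div_consecutive_product_sums[OF assms]
        sums_mult[OF gen_euler_gamma_sums[OF assms(1)], of "z\<^sup>2"]]
    by simp
  moreover have "(\<lambda>j. of_real 1 / of_nat (j + 2) * (polylog (j + 2) z - z))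
                   sums (\<Sum>m. z ^ (m + 2) * of_real (?g (1 / real (m + 2))))"
    using assms(1) ln_one_minus_series_tail_sums by (intro polylog_tail_double_series) auto
  ultimately show ?thesis
    by (simp add: sums_iff)
qed

theorem theorem3:
  fixes z :: complex
  assumes "norm z \<le> 1"
  shows "(\<lambda>j. (-1) ^ (j + 2) * polylog (j + 2) z / of_nat (j + 2))
           sums (z * gen_euler_gamma z)
         \<and> (z \<noteq> 1 \<longrightarrow>
             (\<lambda>j. (polylog (j + 2) z - z) / of_nat (j + 2))
               sums (z + (1 - z) * Ln (1 - z) - z\<^sup>2 * gen_euler_gamma z))"
  using gen_euler_gamma_alternating_polylog_sums[OF assms]
    gen_euler_gamma_polylog_minus_id_sums[OF assms] by blast

end
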